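(* For every integer $n\ge 3$, $g(n,3) \ge n/6$.
   Context: For integers $2\le k\le n$, let $S_n$ denote the set of permutations of $[n]=\{1,\dots,n\}$ (written as sequences), and $S_{n,k}$ the set of all sequences of $k$ distinct elements of $[n]$. A sequence $\kappa\in S_{n,k}$ is a subsequence of a permutation $\pi\in S_n$ if its elements appear in $\pi$ in the same relative order as in $\kappa$. A perfect sequence covering array ${\rm PSCA}(n,k)$ with multiplicity $\lambda$ (a positive integer) is a multiset $X$ of elements of $S_n$ such that every $\kappa\in S_{n,k}$ is a subsequence of exactly $\lambda$ elements of $X$ (counted with multiplicity); such an $X$ has size $\lambda k!$. $g(n,k)$ denotes the smallest $\lambda$ for which a ${\rm PSCA}(n,k)$ with multiplicity $\lambda$ exists. *)

theory Defs
  imports Complex_Main "HOL-Library.Multiset" "HOL-Library.Sublist"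
begin

definition perms_seq :: "nat \<Rightarrow> nat list set" where
  "perms_seq n = {\<pi>. distinct \<pi> \<and> set \<pi> = {1..n}}"

definition kseqs :: "nat \<Rightarrow> nat \<Rightarrow> nat list set" where
  "kseqs n k = {\<kappa>. length \<kappa> = k \<and> distinct \<kappa> \<and> set \<kappa> \<subseteq> {1..n}}"

definition is_PSCA :: "nat \<Rightarrow> nat \<Rightarrow> nat \<Rightarrow> nat list multiset \<Rightarrow> bool" where
  "is_PSCA n k lam X \<longleftrightarrow> 0 < lam \<and> set_mset X \<subseteq> perms_seq n \<and>
     (\<forall>\<kappa>\<in>kseqs n k. size (filter_mset (\<lambda>\<pi>. subseq \<kappa> \<pi>) X) = lam)"

definition g :: "nat \<Rightarrow> nat \<Rightarrow> nat" where
  "g n k = (LEAST lam. \<exists>X. is_PSCA n k lam X)"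

end

theory Submission
  imports Defs "HOL-Analysis.Convex"
begin

text \<open>
  Let X be a PSCA(n,3) with multiplicity \<lambda>, and index real vectors by the members of X
  (with multiplicity). Attach to 1 the all-ones vector and to every i \<ge> 2 the \<plusminus>1-vector
  recording whether i comes before 1. Since every pattern on three letters occurs exactly \<lambda>
  times, the Gram matrix of these n vectors is 6\<lambda> on the diagonal, 2\<lambda> between two elements
  different from 1, and 0 otherwise. This matrix is invertible, so the vectors are linearly
  independent and n \<le> |X| = 6\<lambda>. The least multiplicity is attained because the full
  symmetric group is a PSCA.
\<close>

definition precedes :: "'a list \<Rightarrow> 'a \<Rightarrow> 'a \<Rightarrow> bool" where
  "precedes xs a b \<longleftrightarrow> (\<exists>us vs. xs = us @ a # vs \<and> b \<in> set vs)"

lemma subseq_Cons_iff_split: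
  "subseq (x # xs) ys \<longleftrightarrow> (\<exists>us vs. ys = us @ x # vs \<and> subseq xs vs)"
proof
  show "subseq (x # xs) ys \<Longrightarrow> \<exists>us vs. ys = us @ x # vs \<and> subseq xs vs"
    by (auto dest!: list_emb_ConsD)
qed (auto intro: subseq_drop_many)

lemma subseq_pair_iff_precedes: "subseq [a, b] xs \<longleftrightarrow> precedes xs a b"
  unfolding subseq_Cons_iff_split[of a] subseq_singleton_left precedes_def ..

lemma precedes_split_iff:
  assumes "distinct xs" and "xs = us @ b # vs"
  shows "precedes xs b c \<longleftrightarrow> c \<in> set vs"
  using assms by (auto simp: precedes_def append_Cons_eq_iff)

lemma subseq_triple_iff_precedes:
  assumes "distinct xs"
  shows "subseq [a, b, c] xs \<longleftrightarrow> precedes xs a b \<and> precedes xs b c"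
proof
  assume "subseq [a, b, c] xs"
  then obtain us vs where xs: "xs = us @ a # vs" and "precedes vs b c"
    by (auto simp: subseq_Cons_iff_split[of a] subseq_pair_iff_precedes)
  then obtain ps qs where vs: "vs = ps @ b # qs" and "c \<in> set qs"
    by (auto simp: precedes_def)
  have "xs = us @ a # vs" "b \<in> set vs" "xs = (us @ a # ps) @ b # qs"
    using xs vs by auto
  with \<open>c \<in> set qs\<close> show "precedes xs a b \<and> precedes xs b c"
    unfolding precedes_def by blast
next
  assume ab_bc: "precedes xs a b \<and> precedes xs b c"
  then obtain us vs where xs: "xs = us @ a # vs" and "b \<in> set vs"
    by (auto simp: precedes_def)
  then obtain ps qs where vs: "vs = ps @ b # qs"
    by (meson split_list)
  have "c \<in> set qs"
    using precedes_split_iff[OF assms, of "us @ a # ps" b qs c] ab_bc xs vs by simp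
  then have "precedes vs b c"
    unfolding precedes_def using vs by blast
  then show "subseq [a, b, c] xs"
    unfolding subseq_Cons_iff_split[of a] subseq_pair_iff_precedes using xs by blast
qed

lemma precedes_trans:
  assumes "distinct xs" "precedes xs a b" "precedes xs b c"
  shows "precedes xs a c"
proof -
  have "subseq [a, b, c] xs"
    using assms by (simp add: subseq_triple_iff_precedes)
  then have "subseq [a, c] xs"
    by (rule subseq_order.trans[rotated]) simp
  then show ?thesis
    by (simp add: subseq_pair_iff_precedes)
qed

lemma not_precedes_refl: "distinct xs \<Longrightarrow> \<not> precedes xs a a"
  by (auto simp: precedes_def)

lemma precedes_asym: "distinct xs \<Longrightarrow> precedes xs a b \<Longrightarrow> \<not> precedes xs b a"
  using precedes_trans[of xs a b a] not_precedes_refl[of xs a] by blast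

lemma precedes_total:
  assumes "a \<in> set xs" "b \<in> set xs" "a \<noteq> b"
  shows "precedes xs a b \<or> precedes xs b a"
proof -
  obtain us vs where xs: "xs = us @ a # vs"
    using split_list[OF assms(1)] by blast
  show ?thesis
  proof (cases "b \<in> set vs")
    case True
    then show ?thesis using xs by (auto simp: precedes_def)
  next
    case False
    then have "b \<in> set us"
      using assms(2,3) xs by simp
    then obtain ps qs where "us = ps @ b # qs"
      using split_list by metis
    then have "xs = ps @ b # (qs @ a # vs)"
      using xs by simp
    then show ?thesis
      unfolding precedes_def by (intro disjI2 exI[of _ ps] exI[of _ "qs @ a # vs"]) simp
  qed
qed

lemma precedes_swap_iff:
  assumes "distinct xs" "a \<in> set xs" "b \<in> set xs" "a \<noteq> b"
  shows "precedes xs b a \<longleftrightarrow> \<not> precedes xs a b"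
  using precedes_asym[OF assms(1)] precedes_total[OF assms(2-4)] by blast

lemma precedes_not_precedes_iff_subseq:
  assumes "distinct xs" "b \<in> set xs" "c \<in> set xs" "b \<noteq> c"
  shows "precedes xs a b \<and> \<not> precedes xs c b \<longleftrightarrow> subseq [a, b, c] xs"
  using precedes_swap_iff[OF assms(1,2,3,4)] subseq_triple_iff_precedes[OF assms(1)] by blast

lemma precedes_both_iff_subseq:
  assumes "distinct xs" "a \<in> set xs" "b \<in> set xs" "a \<noteq> b"
  shows "precedes xs a c \<and> precedes xs b c \<longleftrightarrow> subseq [a, b, c] xs \<or> subseq [b, a, c] xs"
  using precedes_total[OF assms(2-4)] precedes_trans[OF assms(1)]
  unfolding subseq_triple_iff_precedes[OF assms(1)] by blast

lemma preceded_by_both_iff_subseq: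
  assumes "distinct xs" "a \<in> set xs" "b \<in> set xs" "a \<noteq> b"
  shows "precedes xs c a \<and> precedes xs c b \<longleftrightarrow> subseq [c, a, b] xs \<or> subseq [c, b, a] xs"
  using precedes_total[OF assms(2-4)] precedes_trans[OF assms(1)]
  unfolding subseq_triple_iff_precedes[OF assms(1)] by blast

lemma subseq_triple_exclusive:
  assumes "distinct xs"
  shows "\<not> (subseq [a, b, c] xs \<and> subseq [b, a, c] xs)"
    and "\<not> (subseq [c, a, b] xs \<and> subseq [c, b, a] xs)"
  using precedes_asym[OF assms, of a b] by (auto simp: subseq_triple_iff_precedes[OF assms])

lemma size_filter_mset_disj:
  assumes "\<And>x. x \<in># M \<Longrightarrow> \<not> (P x \<and> Q x)"
  shows "size {#x \<in># M. P x \<or> Q x#} = size {#x \<in># M. P x#} + size {#x \<in># M. Q x#}"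
  using assms by (induction M) auto

lemma size_filter_mset_conj_split:
  "size {#x \<in># M. P x#} = size {#x \<in># M. P x \<and> Q x#} + size {#x \<in># M. P x \<and> \<not> Q x#}"
  by (induction M) auto

lemma sum_mset_sign:
  "(\<Sum>x\<in>#M. if P x then 1 else -1 :: 'a :: ring_1)
     = of_nat (size {#x \<in># M. P x#}) - of_nat (size {#x \<in># M. \<not> P x#})"
  by (induction M) (auto simp: algebra_simps)

lemma sum_mset_mset_conv_nth: "(\<Sum>x\<in>#mset xs. f x) = (\<Sum>k<length xs. f (xs ! k))"
  by (simp flip: mset_map add: sum_mset_sum_list sum_list_sum_nth atLeast0LessThan)

lemma trace_le_card_if_symmetric_idempotent:
  fixes P :: "'k \<Rightarrow> 'k \<Rightarrow> real"
  assumes "finite K"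
    and sym: "\<And>\<kappa> \<mu>. P \<kappa> \<mu> = P \<mu> \<kappa>"
    and idem: "\<And>\<kappa>. \<kappa> \<in> K \<Longrightarrow> (\<Sum>\<mu>\<in>K. P \<kappa> \<mu> * P \<mu> \<kappa>) = P \<kappa> \<kappa>"
  shows "(\<Sum>\<kappa>\<in>K. P \<kappa> \<kappa>) \<le> card K"
proof -
  define t where "t = (\<Sum>\<kappa>\<in>K. P \<kappa> \<kappa>)"
  have diag_sq_le: "(P \<kappa> \<kappa>)\<^sup>2 \<le> P \<kappa> \<kappa>" if "\<kappa> \<in> K" for \<kappa>
  proof -
    have "(P \<kappa> \<kappa>)\<^sup>2 = (\<Sum>\<mu>\<in>{\<kappa>}. P \<kappa> \<mu> * P \<mu> \<kappa>)"
      by (simp add: power2_eq_square)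
    also have "\<dots> \<le> (\<Sum>\<mu>\<in>K. P \<kappa> \<mu> * P \<mu> \<kappa>)"
      using assms(1) that by (intro sum_mono2) (auto simp: sym[of _ \<kappa>])
    finally show ?thesis
      using idem[OF that] by simp
  qed
  have "t\<^sup>2 \<le> (\<Sum>\<kappa>\<in>K. (P \<kappa> \<kappa>)\<^sup>2) * card K"
    unfolding t_def by (rule sum_squared_le_sum_of_squares)
  also have "\<dots> \<le> t * card K"
    unfolding t_def by (intro mult_right_mono sum_mono diag_sq_le) auto
  finally have "t\<^sup>2 \<le> t * card K" .
  then show ?thesis
    unfolding t_def[symmetric] by (cases "t > 0") (auto simp: power2_eq_square)
qed

text \<open>The matrix P below is the orthogonal projection onto the span of the vectors, so its
  trace is the number of vectors and at most the dimension.\<close>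

lemma card_le_card_if_gram_invertible:
  fixes v :: "'i \<Rightarrow> 'k \<Rightarrow> real" and W :: "'i \<Rightarrow> 'i \<Rightarrow> real"
  assumes fin: "finite I" "finite K"
    and W_sym: "\<And>i j. W i j = W j i"
    and W_inv: "\<And>i l. i \<in> I \<Longrightarrow> l \<in> I \<Longrightarrow>
      (\<Sum>j\<in>I. W i j * (\<Sum>\<kappa>\<in>K. v j \<kappa> * v l \<kappa>)) = (if i = l then 1 else 0)"
  shows "card I \<le> card K"
proof -
  define A where "A i \<mu> = (\<Sum>j\<in>I. W i j * v j \<mu>)" for i \<mu>
  define P where "P \<kappa> \<mu> = (\<Sum>i\<in>I. v i \<kappa> * A i \<mu>)" for \<kappa> \<mu>
  have A_v: "(\<Sum>\<mu>\<in>K. A i \<mu> * v l \<mu>) = (if i = l then 1 else 0)" if "i \<in> I" "l \<in> I" for i l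
  proof -
    have "(\<Sum>\<mu>\<in>K. A i \<mu> * v l \<mu>) = (\<Sum>j\<in>I. W i j * (\<Sum>\<mu>\<in>K. v j \<mu> * v l \<mu>))"
      unfolding A_def sum_distrib_left sum_distrib_right
      by (subst sum.swap) (simp add: mult.assoc)
    then show ?thesis
      using W_inv[OF that] by simp
  qed
  have P_sym: "P \<kappa> \<mu> = P \<mu> \<kappa>" for \<kappa> \<mu>
  proof -
    have "P \<kappa> \<mu> = (\<Sum>i\<in>I. \<Sum>j\<in>I. W i j * v i \<kappa> * v j \<mu>)"
      by (simp add: P_def A_def sum_distrib_left mult.assoc mult.left_commute)
    also have "\<dots> = (\<Sum>j\<in>I. \<Sum>i\<in>I. W i j * v i \<kappa> * v j \<mu>)"
      by (rule sum.swap)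
    also have "\<dots> = P \<mu> \<kappa>"
      by (simp add: P_def A_def sum_distrib_left W_sym mult.commute mult.left_commute)
    finally show ?thesis .
  qed
  have P_idem: "(\<Sum>\<mu>\<in>K. P \<kappa> \<mu> * P \<mu> \<kappa>') = P \<kappa> \<kappa>'" for \<kappa> \<kappa>'
  proof -
    have "(\<Sum>\<mu>\<in>K. P \<kappa> \<mu> * P \<mu> \<kappa>')
        = (\<Sum>\<mu>\<in>K. \<Sum>i\<in>I. \<Sum>l\<in>I. v i \<kappa> * A l \<kappa>' * (A i \<mu> * v l \<mu>))"
      unfolding P_def sum_product by (intro sum.cong refl) (simp add: ac_simps)
    also have "\<dots> = (\<Sum>i\<in>I. \<Sum>l\<in>I. \<Sum>\<mu>\<in>K. v i \<kappa> * A l \<kappa>' * (A i \<mu> * v l \<mu>))"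
      by (subst sum.swap, rule sum.cong[OF refl], rule sum.swap)
    also have "\<dots> = (\<Sum>i\<in>I. \<Sum>l\<in>I. v i \<kappa> * A l \<kappa>' * (\<Sum>\<mu>\<in>K. A i \<mu> * v l \<mu>))"
      by (simp add: sum_distrib_left)
    also have "\<dots> = (\<Sum>i\<in>I. \<Sum>l\<in>I. if l = i then v i \<kappa> * A l \<kappa>' else 0)"
      by (intro sum.cong refl) (auto simp: A_v)
    also have "\<dots> = (\<Sum>i\<in>I. v i \<kappa> * A i \<kappa>')"
      using fin(1) by simp
    finally show ?thesis
      by (simp add: P_def)
  qed
  have "(\<Sum>\<kappa>\<in>K. P \<kappa> \<kappa>) = (\<Sum>i\<in>I. \<Sum>\<kappa>\<in>K. A i \<kappa> * v i \<kappa>)"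
    unfolding P_def by (subst sum.swap) (simp add: mult.commute)
  also have "\<dots> = card I"
    by (simp add: A_v)
  finally show ?thesis
    using trace_le_card_if_symmetric_idempotent[OF fin(2) P_sym P_idem] by simp
qed

definition psca_gram :: "real \<Rightarrow> nat \<Rightarrow> nat \<Rightarrow> real" where
  "psca_gram L i j = (if i = j then 6 * L else if i = 1 \<or> j = 1 then 0 else 2 * L)"

definition psca_gram_inv :: "nat \<Rightarrow> real \<Rightarrow> nat \<Rightarrow> nat \<Rightarrow> real" where
  "psca_gram_inv n L i j =
     (if i = 1 \<or> j = 1 then (if i = j then 1 / (6 * L) else 0)
      else ((if i = j then 1 else 0) - 1 / (real n + 1)) / (4 * L))"

lemma psca_gram_inv_symmetric: "psca_gram_inv n L i j = psca_gram_inv n L j i"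
  by (auto simp: psca_gram_inv_def)

lemma psca_gram_inv_mult:
  assumes "L > 0" and "i \<in> {1..n}" and "l \<in> {1..n}"
  shows "(\<Sum>j\<in>{1..n}. psca_gram_inv n L i j * psca_gram L j l) = (if i = l then 1 else 0)"
proof -
  have split: "{1..n} = insert 1 {2..n}"
    using assms(2) by auto
  have sum_split: "(\<Sum>j\<in>{1..n}. f j) = f 1 + (\<Sum>j\<in>{2..n}. f j)" for f :: "nat \<Rightarrow> real"
    unfolding split by (subst sum.insert) auto
  consider "i = 1" | "i \<noteq> 1" "l = 1" | "i \<in> {2..n}" "l \<in> {2..n}"
    using assms(2,3) by force
  then show ?thesis
  proof cases
    case 1
    have "(\<Sum>j\<in>{2..n}. psca_gram_inv n L i j * psca_gram L j l) = 0"
      using 1 by (intro sum.neutral) (auto simp: psca_gram_inv_def)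
    then show ?thesis
      unfolding sum_split using 1 \<open>L > 0\<close> by (simp add: psca_gram_inv_def psca_gram_def)
  next
    case 2
    have "(\<Sum>j\<in>{2..n}. psca_gram_inv n L i j * psca_gram L j l) = 0"
      using 2 by (intro sum.neutral) (auto simp: psca_gram_def)
    then show ?thesis
      unfolding sum_split using 2 by (simp add: psca_gram_inv_def psca_gram_def)
  next
    case 3
    define c where "c = 1 / (real n + 1)"
    have "(\<Sum>j\<in>{2..n}. psca_gram_inv n L i j * psca_gram L j l)
        = (\<Sum>j\<in>{2..n}. (if j = i then (if i = l then 3 / 2 else 1 / 2) else 0)
             - (if j = l then c else 0) - c / 2)"
      using 3 \<open>L > 0\<close> unfolding psca_gram_inv_def psca_gram_def c_def[symmetric]
      by (intro sum.cong refl) (auto simp: field_simps)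
    also have "\<dots> = (if i = l then 3 / 2 else 1 / 2) - c - c * (real n - 1) / 2"
      using 3 by (simp add: sum_subtractf of_nat_diff)
    also have "\<dots> = (if i = l then 3 / 2 else 1 / 2) - c * (real n + 1) / 2"
      by (simp add: field_simps)
    also have "c * (real n + 1) = 1"
      by (simp add: c_def)
    finally have "(\<Sum>j\<in>{2..n}. psca_gram_inv n L i j * psca_gram L j l) = (if i = l then 1 else 0)"
      by simp
    then show ?thesis
      unfolding sum_split using 3 by (simp add: psca_gram_inv_def psca_gram_def)
  qed
qed

lemma finite_perms_seq: "finite (perms_seq n)"
proof (rule finite_subset)
  show "perms_seq n \<subseteq> {xs. set xs \<subseteq> {1..n} \<and> length xs = n}"
    unfolding perms_seq_def using distinct_card by fastforce
  show "finite {xs. set xs \<subseteq> {1..n} \<and> length xs = n}"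
    by (rule finite_lists_length_eq) simp
qed

lemma kseqs_relabel:
  assumes "\<kappa> \<in> kseqs n k" and "\<kappa>' \<in> kseqs n k"
  obtains \<sigma> where "bij_betw \<sigma> {1..n} {1..n}" and "map \<sigma> \<kappa> = \<kappa>'"
proof -
  have \<kappa>: "distinct \<kappa>" "length \<kappa> = k" "set \<kappa> \<subseteq> {1..n}"
    and \<kappa>': "distinct \<kappa>'" "length \<kappa>' = k" "set \<kappa>' \<subseteq> {1..n}"
    using assms by (auto simp: kseqs_def)
  have "card ({1..n} - set \<kappa>) = card ({1..n} - set \<kappa>')"
    using \<kappa> \<kappa>' by (simp add: card_Diff_subset distinct_card)
  then obtain h where h: "bij_betw h ({1..n} - set \<kappa>) ({1..n} - set \<kappa>')"
    using finite_same_card_bij by blast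
  define \<sigma> where "\<sigma> x = (if x \<in> set \<kappa> then the (map_of (zip \<kappa> \<kappa>') x) else h x)" for x
  have map_\<sigma>: "map \<sigma> \<kappa> = \<kappa>'"
    using \<kappa> \<kappa>' by (intro nth_equalityI) (simp_all add: \<sigma>_def map_of_zip_nth)
  have "bij_betw \<sigma> (set \<kappa>) (set \<kappa>')"
  proof -
    have "\<sigma> ` set \<kappa> = set \<kappa>'"
      using map_\<sigma> by (metis set_map)
    moreover have "inj_on \<sigma> (set \<kappa>)"
      using calculation \<kappa> \<kappa>' by (simp add: inj_on_iff_eq_card distinct_card)
    ultimately show ?thesis
      by (simp add: bij_betw_def)
  qed
  moreover have "bij_betw \<sigma> ({1..n} - set \<kappa>) ({1..n} - set \<kappa>')"
    using h by (rule bij_betw_cong[THEN iffD1, rotated]) (simp add: \<sigma>_def)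
  ultimately have "bij_betw \<sigma> (set \<kappa> \<union> ({1..n} - set \<kappa>)) (set \<kappa>' \<union> ({1..n} - set \<kappa>'))"
    by (rule bij_betw_combine) auto
  then have "bij_betw \<sigma> {1..n} {1..n}"
    using \<kappa> \<kappa>' by (simp add: Un_absorb1)
  then show thesis
    using that map_\<sigma> by blast
qed

lemma card_perms_containing_le:
  assumes "\<kappa> \<in> kseqs n k" and "\<kappa>' \<in> kseqs n k"
  shows "card {\<pi> \<in> perms_seq n. subseq \<kappa> \<pi>} \<le> card {\<pi> \<in> perms_seq n. subseq \<kappa>' \<pi>}"
proof -
  obtain \<sigma> where \<sigma>: "bij_betw \<sigma> {1..n} {1..n}" and map_\<sigma>: "map \<sigma> \<kappa> = \<kappa>'"
    using kseqs_relabel[OF assms] .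
  show ?thesis
  proof (rule card_inj_on_le[where f = "map \<sigma>"])
    show "inj_on (map \<sigma>) {\<pi> \<in> perms_seq n. subseq \<kappa> \<pi>}"
    proof (rule inj_onI)
      fix xs ys
      assume "xs \<in> {\<pi> \<in> perms_seq n. subseq \<kappa> \<pi>}" "ys \<in> {\<pi> \<in> perms_seq n. subseq \<kappa> \<pi>}"
        and "map \<sigma> xs = map \<sigma> ys"
      moreover have "inj_on \<sigma> (set xs \<union> set ys)"
        using calculation \<sigma> by (auto simp: perms_seq_def bij_betw_def)
      ultimately show "xs = ys"
        using map_inj_on by blast
    qed
    show "map \<sigma> ` {\<pi> \<in> perms_seq n. subseq \<kappa> \<pi>} \<subseteq> {\<pi> \<in> perms_seq n. subseq \<kappa>' \<pi>}"
    proof (rule image_subsetI)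
      fix \<pi> assume "\<pi> \<in> {\<pi> \<in> perms_seq n. subseq \<kappa> \<pi>}"
      then show "map \<sigma> \<pi> \<in> {\<pi> \<in> perms_seq n. subseq \<kappa>' \<pi>}"
        using \<sigma> map_\<sigma> subseq_map[of \<kappa> \<pi> \<sigma>]
        by (auto simp: perms_seq_def bij_betw_def distinct_map)
    qed
  qed (simp add: finite_perms_seq)
qed

lemma is_PSCA_perms_seq:
  assumes "k \<le> n"
  shows "\<exists>lam. is_PSCA n k lam (mset_set (perms_seq n))"
proof -
  define \<kappa>\<^sub>0 where "\<kappa>\<^sub>0 = [1..<k + 1]"
  have \<kappa>\<^sub>0: "\<kappa>\<^sub>0 \<in> kseqs n k"
    using assms by (auto simp: kseqs_def \<kappa>\<^sub>0_def)
  define lam where "lam = card {\<pi> \<in> perms_seq n. subseq \<kappa>\<^sub>0 \<pi>}"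
  have count: "card {\<pi> \<in> perms_seq n. subseq \<kappa> \<pi>} = lam" if "\<kappa> \<in> kseqs n k" for \<kappa>
    unfolding lam_def using card_perms_containing_le[OF that \<kappa>\<^sub>0] card_perms_containing_le[OF \<kappa>\<^sub>0 that]
    by simp
  have "[1..<n + 1] = \<kappa>\<^sub>0 @ [k + 1..<n + 1]"
    unfolding \<kappa>\<^sub>0_def using assms upt_add_eq_append[of 1 "k + 1" "n - k"] by simp
  then have "subseq \<kappa>\<^sub>0 [1..<n + 1]"
    by (metis subseq_order.refl subseq_rev_drop_many)
  moreover have "[1..<n + 1] \<in> perms_seq n"
    by (auto simp: perms_seq_def)
  ultimately have "[1..<n + 1] \<in> {\<pi> \<in> perms_seq n. subseq \<kappa>\<^sub>0 \<pi>}"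
    by simp
  then have "lam > 0"
    unfolding lam_def using finite_perms_seq by (subst card_gt_0_iff) auto
  then have "is_PSCA n k lam (mset_set (perms_seq n))"
    using count finite_perms_seq by (simp add: is_PSCA_def)
  then show ?thesis ..
qed

definition sign_vector :: "nat \<Rightarrow> nat list \<Rightarrow> real" where
  "sign_vector i \<pi> = (if i = 1 \<or> precedes \<pi> i 1 then 1 else -1)"

locale psca3 =
  fixes n lam :: nat and X :: "nat list multiset"
  assumes three_le: "3 \<le> n" and psca: "is_PSCA n 3 lam X"
begin

lemma mem_perms: "\<pi> \<in># X \<Longrightarrow> distinct \<pi> \<and> set \<pi> = {1..n}"
  using psca by (auto simp: is_PSCA_def perms_seq_def)

lemma count_pattern:
  assumes "{a, b, c} \<subseteq> {1..n}" "distinct [a, b, c]"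
  shows "size {#\<pi> \<in># X. subseq [a, b, c] \<pi>#} = lam"
proof -
  have "[a, b, c] \<in> kseqs n 3"
    using assms by (simp add: kseqs_def)
  then show ?thesis
    using psca by (simp add: is_PSCA_def)
qed

context
  fixes x y :: nat
  assumes x: "x \<in> {2..n}" and y: "y \<in> {2..n}" and x_ne_y: "x \<noteq> y"
begin

lemma perm_facts:
  assumes "\<pi> \<in># X"
  shows "distinct \<pi>" "1 \<in> set \<pi>" "x \<in> set \<pi>" "y \<in> set \<pi>" "x \<noteq> 1" "y \<noteq> 1"
  using mem_perms[OF assms] x y by auto

lemma count_before_after: "size {#\<pi> \<in># X. precedes \<pi> x 1 \<and> \<not> precedes \<pi> y 1#} = lam"
proof -
  have "{#\<pi> \<in># X. precedes \<pi> x 1 \<and> \<not> precedes \<pi> y 1#} = {#\<pi> \<in># X. subseq [x, 1, y] \<pi>#}"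
    using perm_facts by (intro filter_mset_cong0 precedes_not_precedes_iff_subseq) auto
  then show ?thesis
    using x y x_ne_y by (simp add: count_pattern)
qed

lemma count_before_before: "size {#\<pi> \<in># X. precedes \<pi> x 1 \<and> precedes \<pi> y 1#} = 2 * lam"
proof -
  have "{#\<pi> \<in># X. precedes \<pi> x 1 \<and> precedes \<pi> y 1#}
      = {#\<pi> \<in># X. subseq [x, y, 1] \<pi> \<or> subseq [y, x, 1] \<pi>#}"
  proof (rule filter_mset_cong0)
    fix \<pi> assume "\<pi> \<in># X"
    note facts = perm_facts[OF this]
    show "precedes \<pi> x 1 \<and> precedes \<pi> y 1 \<longleftrightarrow> subseq [x, y, 1] \<pi> \<or> subseq [y, x, 1] \<pi>"
      by (rule precedes_both_iff_subseq[OF facts(1,3,4) x_ne_y])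
  qed
  moreover have "size {#\<pi> \<in># X. subseq [x, y, 1] \<pi> \<or> subseq [y, x, 1] \<pi>#}
      = size {#\<pi> \<in># X. subseq [x, y, 1] \<pi>#} + size {#\<pi> \<in># X. subseq [y, x, 1] \<pi>#}"
    by (intro size_filter_mset_disj subseq_triple_exclusive(1) perm_facts(1))
  ultimately show ?thesis
    using x y x_ne_y by (simp add: count_pattern)
qed

lemma count_after_after: "size {#\<pi> \<in># X. \<not> precedes \<pi> x 1 \<and> \<not> precedes \<pi> y 1#} = 2 * lam"
proof -
  have "{#\<pi> \<in># X. \<not> precedes \<pi> x 1 \<and> \<not> precedes \<pi> y 1#}
      = {#\<pi> \<in># X. subseq [1, x, y] \<pi> \<or> subseq [1, y, x] \<pi>#}"
  proof (rule filter_mset_cong0)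
    fix \<pi> assume "\<pi> \<in># X"
    note facts = perm_facts[OF this]
    show "(\<not> precedes \<pi> x 1 \<and> \<not> precedes \<pi> y 1) \<longleftrightarrow> subseq [1, x, y] \<pi> \<or> subseq [1, y, x] \<pi>"
      using precedes_swap_iff[OF facts(1,2,3)] precedes_swap_iff[OF facts(1,2,4)]
        preceded_by_both_iff_subseq[OF facts(1,3,4) x_ne_y, of 1] facts(5,6) by auto
  qed
  moreover have "size {#\<pi> \<in># X. subseq [1, x, y] \<pi> \<or> subseq [1, y, x] \<pi>#}
      = size {#\<pi> \<in># X. subseq [1, x, y] \<pi>#} + size {#\<pi> \<in># X. subseq [1, y, x] \<pi>#}"
    by (intro size_filter_mset_disj subseq_triple_exclusive(2) perm_facts(1))
  ultimately show ?thesis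
    using x y x_ne_y by (simp add: count_pattern)
qed

end

lemma ex_other_ge_two: "\<exists>y\<in>{2..n}. y \<noteq> x"
  using three_le by (intro bexI[of _ "if x = 2 then 3 else 2"]) auto

lemma count_before:
  assumes "x \<in> {2..n}"
  shows "size {#\<pi> \<in># X. precedes \<pi> x 1#} = 3 * lam"
proof -
  obtain y where y: "y \<in> {2..n}" "y \<noteq> x"
    using ex_other_ge_two by blast
  then show ?thesis
    using size_filter_mset_conj_split[of "\<lambda>\<pi>. precedes \<pi> x 1" X "\<lambda>\<pi>. precedes \<pi> y 1"]
      count_before_before[OF assms y(1) y(2)[symmetric]] count_before_after[OF assms y(1) y(2)[symmetric]]
    by simp
qed

lemma count_after:
  assumes "x \<in> {2..n}"
  shows "size {#\<pi> \<in># X. \<not> precedes \<pi> x 1#} = 3 * lam"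
proof -
  obtain y where y: "y \<in> {2..n}" "y \<noteq> x"
    using ex_other_ge_two by blast
  have "{#\<pi> \<in># X. \<not> precedes \<pi> x 1 \<and> precedes \<pi> y 1#} = {#\<pi> \<in># X. precedes \<pi> y 1 \<and> \<not> precedes \<pi> x 1#}"
    by (meson filter_mset_cong0)
  then show ?thesis
    using size_filter_mset_conj_split[of "\<lambda>\<pi>. \<not> precedes \<pi> x 1" X "\<lambda>\<pi>. precedes \<pi> y 1"]
      count_after_after[OF assms y(1) y(2)[symmetric]] count_before_after[OF y(1) assms y(2)] by simp
qed

lemma size_X: "size X = 6 * lam"
proof -
  have "(2::nat) \<in> {2..n}"
    using three_le by simp
  then show ?thesis
    using size_filter_mset_conj_split[of "\<lambda>_. True" X "\<lambda>\<pi>. precedes \<pi> 2 1"]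
      count_before count_after by simp
qed

lemma inner_sign_vector:
  assumes "i \<in> {1..n}" "l \<in> {1..n}"
  shows "(\<Sum>\<pi>\<in>#X. sign_vector i \<pi> * sign_vector l \<pi>) = psca_gram lam i l"
proof -
  consider "i = l" | "i = 1" "l \<in> {2..n}" | "l = 1" "i \<in> {2..n}" | "i \<in> {2..n}" "l \<in> {2..n}" "i \<noteq> l"
    using assms by force
  then show ?thesis
  proof cases
    case 1
    have "sign_vector i \<pi> * sign_vector l \<pi> = 1" for \<pi>
      using 1 by (simp add: sign_vector_def)
    then show ?thesis
      using 1 by (simp add: psca_gram_def size_X)
  next
    case 2
    then show ?thesis
      using count_before[OF 2(2)] count_after[OF 2(2)]
      by (simp add: sign_vector_def psca_gram_def sum_mset_sign)
  next
    case 3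
    then show ?thesis
      using count_before[OF 3(2)] count_after[OF 3(2)]
      by (simp add: sign_vector_def psca_gram_def sum_mset_sign)
  next
    case 4
    have "(\<Sum>\<pi>\<in>#X. sign_vector i \<pi> * sign_vector l \<pi>)
        = (\<Sum>\<pi>\<in>#X. if precedes \<pi> i 1 \<and> precedes \<pi> l 1 \<or> \<not> precedes \<pi> i 1 \<and> \<not> precedes \<pi> l 1
                    then 1 else -1)"
      using 4 by (intro arg_cong[of _ _ sum_mset] image_mset_cong) (auto simp: sign_vector_def)
    also have "\<dots> = real (2 * lam + 2 * lam) - real (lam + lam)"
    proof -
      have "size {#\<pi> \<in># X. precedes \<pi> i 1 \<and> precedes \<pi> l 1 \<or> \<not> precedes \<pi> i 1 \<and> \<not> precedes \<pi> l 1#}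
          = 2 * lam + 2 * lam"
        using count_before_before[OF 4] count_after_after[OF 4]
        by (subst size_filter_mset_disj) auto
      moreover have "{#\<pi> \<in># X. \<not> (precedes \<pi> i 1 \<and> precedes \<pi> l 1 \<or> \<not> precedes \<pi> i 1 \<and> \<not> precedes \<pi> l 1)#}
          = {#\<pi> \<in># X. precedes \<pi> i 1 \<and> \<not> precedes \<pi> l 1 \<or> precedes \<pi> l 1 \<and> \<not> precedes \<pi> i 1#}"
        by (rule filter_mset_cong0) blast
      moreover have "size \<dots> = lam + lam"
        using count_before_after[OF 4] count_before_after[OF 4(2,1) 4(3)[symmetric]]
        by (subst size_filter_mset_disj) auto
      ultimately show ?thesis
        by (simp only: sum_mset_sign)
    qed
    finally show ?thesis
      using 4 by (simp add: psca_gram_def)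
  qed
qed

lemma n_le_six_lam: "n \<le> 6 * lam"
proof -
  obtain xs where xs: "mset xs = X"
    using ex_mset by blast
  define v where "v i k = sign_vector i (xs ! k)" for i k
  have "lam > 0"
    using psca by (simp add: is_PSCA_def)
  have inner: "(\<Sum>k<length xs. v j k * v l k) = psca_gram lam j l"
    if "j \<in> {1..n}" "l \<in> {1..n}" for j l
    using sum_mset_mset_conv_nth[of "\<lambda>\<pi>. sign_vector j \<pi> * sign_vector l \<pi>" xs]
      inner_sign_vector[OF that] xs by (simp add: v_def)
  have "card {1..n} \<le> card {..<length xs}"
  proof (rule card_le_card_if_gram_invertible[where v = v and W = "psca_gram_inv n lam"])
    fix i l assume il: "i \<in> {1..n}" "l \<in> {1..n}"
    have "(\<Sum>j\<in>{1..n}. psca_gram_inv n lam i j * (\<Sum>k<length xs. v j k * v l k))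
        = (\<Sum>j\<in>{1..n}. psca_gram_inv n lam i j * psca_gram lam j l)"
      using il by (intro sum.cong refl) (simp add: inner)
    also have "\<dots> = (if i = l then 1 else 0)"
      using il \<open>lam > 0\<close> by (intro psca_gram_inv_mult) auto
    finally show "(\<Sum>j\<in>{1..n}. psca_gram_inv n lam i j * (\<Sum>k<length xs. v j k * v l k))
        = (if i = l then 1 else 0)" .
  qed (auto simp: psca_gram_inv_symmetric)
  then show ?thesis
    using xs size_X by auto
qed

end

theorem lemma3p1:
  fixes n :: nat
  assumes "3 \<le> n"
  shows "real (g n 3) \<ge> real n / 6"
proof -
  have "\<exists>lam X. is_PSCA n 3 lam X"
    using is_PSCA_perms_seq[of 3 n] assms by blast
  then have "\<exists>X. is_PSCA n 3 (g n 3) X"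
    unfolding g_def by (rule LeastI_ex)
  then obtain X where "is_PSCA n 3 (g n 3) X" ..
  then have "n \<le> 6 * g n 3"
    using assms by (intro psca3.n_le_six_lam) (simp add: psca3_def)
  then show ?thesis
    by simp
qed

end
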